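(* For every integer $n>5$ with $n\neq10$ and every integer $k$ with $1\le k\le 9$, $F_{5,k}(n)\neq0$.
   Context: For an integer $j\ge0$, $\binom{x}{j}=x(x-1)\cdots(x-j+1)/j!$ as a polynomial in $x$, and $\binom{x}{j}=0$ for $j<0$. For integers $s\ge1$, $k\ge1$, the Moser polynomial is $F_{s,k}(x)=\sum_{p=1}^{s}(-1)^{p-1}p^{k-1}\binom{x}{s-p}$. *)

theory Defs
  imports Complex_Main
begin

definition moser :: "nat \<Rightarrow> nat \<Rightarrow> 'a::field_char_0 \<Rightarrow> 'a" where
  "moser s k x = (\<Sum>p = 1..s. (-1) ^ (p - 1) * of_nat p ^ (k - 1) * (x gchoose (s - p)))"

end

theory Submission
  imports Defs
begin

text \<open>
  Clearing denominators, 24 F_{5,k}(n) is the integer quartic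
  n(n-1)(n-2)(n-3) - 4 2^d n(n-1)(n-2) + 12 3^d n(n-1) - 24 4^d n + 24 5^d with d = k - 1.
  Grouping the first two and the next two terms shows that it is positive as soon as
  n \<ge> 4 2^d + 3; the finitely many remaining n are checked by evaluation.
\<close>

definition scaled_moser5 :: "nat \<Rightarrow> int \<Rightarrow> int" where
  "scaled_moser5 d n =
     n*(n-1)*(n-2)*(n-3) - 4*2^d*n*(n-1)*(n-2) + 12*3^d*n*(n-1) - 24*4^d*n + 24*5^d"

lemma moser_5_expand:
  fixes x :: "'a::field_char_0"
  shows "24 * moser 5 k x = x*(x-1)*(x-2)*(x-3) - 4*2^(k-1)*x*(x-1)*(x-2)
           + 12*3^(k-1)*x*(x-1) - 24*4^(k-1)*x + 24*5^(k-1)"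
proof -
  have "{1..5::nat} = {1,2,3,4,5}" by auto
  then show ?thesis
    by (simp add: moser_def eval_nat_numeral gbinomial_Suc field_simps)
qed

lemma moser_5_of_int:
  "24 * moser 5 k (of_int n :: 'a::field_char_0) = of_int (scaled_moser5 (k - 1) n)"
  by (simp add: moser_5_expand scaled_moser5_def)

lemma scaled_moser5_pos:
  assumes "4 * 2^d + 3 \<le> n"
  shows "scaled_moser5 d n > 0"
proof -
  have "2 * 2^d \<le> n - 1" and "n \<ge> 3"
    using assms zero_le_power[of "2::int" d] by linarith+
  have cubic_part: "n*(n-1)*(n-2)*(n-3) - 4*2^d*n*(n-1)*(n-2) = n*(n-1)*(n-2)*(n-3-4*2^d)"
    by (simp add: algebra_simps)
  have "0 \<le> n*(n-1)*(n-2)*(n-3-4*2^d)"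
    using \<open>n \<ge> 3\<close> assms by simp
  have "(2::int) * 4^d = 2 * 2^d * 2^d"
    by (simp flip: power_mult_distrib)
  also have "\<dots> \<le> 2 * 2^d * 3^d"
    by (simp add: power_mono)
  also have "\<dots> \<le> (n-1) * 3^d"
    using \<open>2 * 2^d \<le> n - 1\<close> by (intro mult_right_mono) simp_all
  finally have "0 \<le> 3^d * (n-1) - 2 * 4^d" by (simp add: mult.commute)
  then have "0 \<le> 12*n*(3^d * (n-1) - 2 * 4^d)"
    using \<open>n \<ge> 3\<close> by simp
  then have linear_part: "0 \<le> 12*3^d*n*(n-1) - 24*4^d*n"
    by (simp add: algebra_simps)
  have "(0::int) < 24*5^d" by simp
  with \<open>0 \<le> n*(n-1)*(n-2)*(n-3-4*2^d)\<close> linear_part show ?thesis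
    unfolding scaled_moser5_def cubic_part[symmetric] by linarith
qed

lemma scaled_moser5_nonzero_small:
  "list_all (\<lambda>d. list_all (\<lambda>n. n = 10 \<or> scaled_moser5 d n \<noteq> 0) [6..4 * 2^d + 2]) [0..<9]"
  by code_simp

theorem mainTheorem15:
  fixes n :: int and k :: nat
  assumes "n > 5" and "n \<noteq> 10" and "1 \<le> k" and "k \<le> 9"
  shows "moser 5 k (of_int n :: rat) \<noteq> 0"
proof -
  have "scaled_moser5 (k - 1) n \<noteq> 0"
  proof (cases "4 * 2^(k-1) + 3 \<le> n")
    case True
    then show ?thesis using scaled_moser5_pos by (metis less_irrefl)
  next
    case False
    then have "n \<in> set [6..4 * 2^(k-1) + 2]" using assms(1) by auto
    moreover have "k - 1 \<in> set [0..<9]" using assms(4) by auto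
    ultimately show ?thesis
      using scaled_moser5_nonzero_small assms(2) unfolding list_all_iff by blast
  qed
  then show ?thesis
    using moser_5_of_int[of k n, where 'a = rat] by auto
qed

end
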